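(* Let $\mathcal{S},\mathcal{T}\subset\mathbb{P}$ be nonempty subsets which are each totally ordered with respect to the Loewner order, and suppose $\mathcal{S}$ has a maximum element $M$ and $\mathcal{T}$ has a maximum element $N$. Then $$M\# N=\max\Big\{X\in\mathbb{H}:\ \begin{pmatrix}A & X\\ X & B\end{pmatrix}\geq 0 \text{ for some } A\in\mathcal{S},\ B\in\mathcal{T}\Big\},$$ where the maximum is taken with respect to the Loewner order.
   Context: $\mathbb{H}$ denotes the real vector space of $n\times n$ complex Hermitian matrices and $\mathbb{P}\subset\mathbb{H}$ the open cone of positive definite matrices. The Loewner order: $A\leq B$ iff $B-A$ is positive semidefinite. For $A,B\in\mathbb{P}$ and $t\in[0,1]$, $A\#_t B:=A^{1/2}(A^{-1/2}BA^{-1/2})^tA^{1/2}$ and $A\# B:=A\#_{1/2}B$. *)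

theory Defs
  imports "HOL-Analysis.Analysis"
begin

definition adj :: "complex^'n^'n \<Rightarrow> complex^'n^'n" where
  "adj A = (\<chi> i j. cnj (A $ j $ i))"

definition hermitian :: "complex^'n^'n \<Rightarrow> bool" where
  "hermitian A \<longleftrightarrow> adj A = A"

definition qform :: "complex^'n^'n \<Rightarrow> complex^'n \<Rightarrow> complex" where
  "qform A x = (\<Sum>i\<in>UNIV. cnj (x $ i) * (A *v x) $ i)"

definition psd :: "complex^'n^'n \<Rightarrow> bool" where
  "psd A \<longleftrightarrow> hermitian A \<and> (\<forall>x. 0 \<le> Re (qform A x))"

definition posdef :: "complex^'n^'n \<Rightarrow> bool" where
  "posdef A \<longleftrightarrow> hermitian A \<and> (\<forall>x. x \<noteq> 0 \<longrightarrow> 0 < Re (qform A x))"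

definition loewner_le :: "complex^'n^'n \<Rightarrow> complex^'n^'n \<Rightarrow> bool" where
  "loewner_le A B \<longleftrightarrow> psd (B - A)"

definition msqrt :: "complex^'n^'n \<Rightarrow> complex^'n^'n" where
  "msqrt A = (THE S. psd S \<and> S ** S = A)"

definition gmean :: "complex^'n^'n \<Rightarrow> complex^'n^'n \<Rightarrow> complex^'n^'n" where
  "gmean A B = (let R = msqrt A; Ri = matrix_inv R in R ** msqrt (Ri ** B ** Ri) ** R)"

definition block2 :: "complex^'n^'n \<Rightarrow> complex^'n^'n \<Rightarrow> complex^'n^'n \<Rightarrow> complex^'n^'n
    \<Rightarrow> complex^('n+'n)^('n+'n)" where
  "block2 A X Y B = (\<chi> i j. case (i, j) of
      (Inl a, Inl b) \<Rightarrow> A $ a $ b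
    | (Inl a, Inr b) \<Rightarrow> X $ a $ b
    | (Inr a, Inl b) \<Rightarrow> Y $ a $ b
    | (Inr a, Inr b) \<Rightarrow> B $ a $ b)"

definition loewner_max :: "(complex^'n^'n) set \<Rightarrow> complex^'n^'n \<Rightarrow> bool" where
  "loewner_max S M \<longleftrightarrow> M \<in> S \<and> (\<forall>X\<in>S. loewner_le X M)"

definition loewner_chain :: "(complex^'n^'n) set \<Rightarrow> bool" where
  "loewner_chain S \<longleftrightarrow> (\<forall>A\<in>S. \<forall>B\<in>S. loewner_le A B \<or> loewner_le B A)"

end

theory Submission
  imports Defs
begin

text \<open>
  For positive definite \<open>A\<close>, \<open>B\<close> let \<open>R = A^(1/2)\<close>. Congruence with
  \<open>diag(R^-1, R^-1)\<close> turns \<open>[[A, X], [X, B]]\<close> into \<open>[[I, C], [C, D]]\<close> with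
  \<open>C = R^-1 X R^-1\<close> and \<open>D = R^-1 B R^-1\<close>, and by completing the square this block matrix
  is positive semidefinite iff \<open>C^2 <= D = P^2\<close> with \<open>P = D^(1/2)\<close>. For Hermitian \<open>C\<close>
  and \<open>P >= 0\<close>, \<open>C^2 <= P^2\<close> forces \<open>C <= P\<close>: an eigenvector \<open>v\<close> of \<open>P - C\<close> with
  eigenvalue \<open>l < 0\<close> would give \<open>|C v|^2 = |P v|^2 - 2 l <v, P v> + l^2 |v|^2 > |P v|^2\<close>.
  Hence every admissible \<open>X = R C R\<close> lies below \<open>R P R = A # B\<close>, which is itself admissible.
  Enlarging the diagonal blocks preserves positivity, so \<open>A # B <= M # N\<close> whenever
  \<open>A <= M\<close> and \<open>B <= N\<close>.

  Square roots and eigenvectors come from the spectral theorem for Hermitian matrices, proved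
  by repeatedly minimising the quadratic form over the unit vectors orthogonal to the
  eigenvectors found so far.
\<close>

section \<open>Hermitian matrices and the Loewner order\<close>

declare vec.add [simp] vec.diff [simp] vec.neg [simp] vec.scale [simp]
  matrix_vector_mult_add_rdistrib [simp] matrix_vector_mult_diff_rdistrib [simp]
  matrix_vector_mul_assoc [symmetric, simp]

definition cinner :: "complex^'n \<Rightarrow> complex^'n \<Rightarrow> complex" where
  "cinner x y = (\<Sum>i\<in>UNIV. cnj (x $ i) * y $ i)"

lemma qform_eq_cinner: "qform A x = cinner x (A *v x)"
  by (simp add: qform_def cinner_def)

lemma
  shows cinner_add_right [simp]: "cinner x (y + z) = cinner x y + cinner x z"
    and cinner_add_left [simp]: "cinner (x + y) z = cinner x z + cinner y z"
    and cinner_diff_right [simp]: "cinner x (y - z) = cinner x y - cinner x z"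
    and cinner_diff_left [simp]: "cinner (x - y) z = cinner x z - cinner y z"
    and cinner_minus_right [simp]: "cinner x (- y) = - cinner x y"
    and cinner_zero_right [simp]: "cinner x 0 = 0"
    and cinner_zero_left [simp]: "cinner 0 y = 0"
    and cinner_scale_right [simp]: "cinner x (c *s y) = c * cinner x y"
    and cinner_scale_left [simp]: "cinner (c *s x) y = cnj c * cinner x y"
  by (simp_all add: cinner_def algebra_simps sum.distrib sum_subtractf sum_negf sum_distrib_left)

lemma cinner_sum_right: "cinner x (\<Sum>v\<in>E. f v) = (\<Sum>v\<in>E. cinner x (f v))"
  by (simp add: cinner_def sum_component sum_distrib_left) (rule sum.swap)

lemma cinner_commute: "cinner y x = cnj (cinner x y)"
  by (simp add: cinner_def mult.commute)

lemma Re_cinner_commute: "Re (cinner y x) = Re (cinner x y)"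
  by (simp add: cinner_commute[of y x])

lemma cinner_self: "cinner x x = of_real ((norm x)\<^sup>2)"
proof -
  have "cinner x x = (\<Sum>i\<in>UNIV. of_real ((norm (x $ i))\<^sup>2))"
    unfolding cinner_def by (intro sum.cong refl) (metis complex_norm_square mult.commute)
  also have "\<dots> = of_real ((norm x)\<^sup>2)"
    by (simp add: norm_vec_def L2_set_def sum_nonneg)
  finally show ?thesis .
qed

lemma cinner_self_eq_0_iff [simp]: "cinner x x = 0 \<longleftrightarrow> x = 0"
  by (simp add: cinner_self)

lemma cinner_eqI: "(\<And>y. cinner y a = cinner y b) \<Longrightarrow> a = b"
  by (metis cinner_diff_right cinner_self_eq_0_iff eq_iff_diff_eq_0)

lemma cinner_adj: "cinner x (A *v y) = cinner (adj A *v x) y"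
  unfolding cinner_def adj_def matrix_vector_mult_def
  by (simp add: sum_distrib_left sum_distrib_right algebra_simps) (rule sum.swap)

lemma hermitian_cinner: "hermitian A \<Longrightarrow> cinner x (A *v y) = cinner (A *v x) y"
  by (simp add: hermitian_def cinner_adj)

lemma hermitian_iff_cinner: "hermitian A \<longleftrightarrow> (\<forall>x y. cinner x (A *v y) = cinner (A *v x) y)"
proof
  assume "\<forall>x y. cinner x (A *v y) = cinner (A *v x) y"
  then have "adj A *v x = A *v x" for x
    by (intro cinner_eqI) (metis cinner_adj cinner_commute)
  then show "hermitian A" by (simp add: hermitian_def matrix_eq)
qed (simp add: hermitian_cinner)

lemma hermitian_add: "hermitian A \<Longrightarrow> hermitian B \<Longrightarrow> hermitian (A + B)"
  and hermitian_diff: "hermitian A \<Longrightarrow> hermitian B \<Longrightarrow> hermitian (A - B)"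
  and hermitian_congruence: "hermitian S \<Longrightarrow> hermitian A \<Longrightarrow> hermitian (S ** A ** S)"
  and hermitian_square: "hermitian A \<Longrightarrow> hermitian (A ** A)"
  and hermitian_mat_1: "hermitian (mat 1)"
  by (simp_all add: hermitian_iff_cinner hermitian_cinner)

lemma psd_imp_hermitian: "psd A \<Longrightarrow> hermitian A"
  by (simp add: psd_def)

lemma psd_qform_nonneg: "psd A \<Longrightarrow> 0 \<le> Re (qform A x)"
  by (simp add: psd_def)

lemma posdef_imp_psd: "posdef A \<Longrightarrow> psd A"
  unfolding psd_def posdef_def by (metis cinner_zero_left less_imp_le order.refl qform_eq_cinner
    zero_complex.sel(1))

lemma psd_add: "psd A \<Longrightarrow> psd B \<Longrightarrow> psd (A + B)"
  by (simp add: psd_def hermitian_add qform_eq_cinner)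

lemma loewner_le_refl [simp]: "loewner_le A A"
  by (simp add: loewner_le_def psd_def hermitian_def adj_def vec_eq_iff qform_eq_cinner)

lemma loewner_le_trans [trans]: "loewner_le A B \<Longrightarrow> loewner_le B C \<Longrightarrow> loewner_le A C"
  unfolding loewner_le_def using psd_add[of "C - B" "B - A"] by simp

lemma qform_congruence: "hermitian S \<Longrightarrow> qform (S ** A ** S) x = qform A (S *v x)"
  by (simp add: qform_eq_cinner hermitian_cinner[of S])

lemma psd_congruence: "hermitian S \<Longrightarrow> psd A \<Longrightarrow> psd (S ** A ** S)"
  by (simp add: psd_def hermitian_congruence qform_congruence)

section \<open>The spectral theorem\<close>

lemma loewner_le_congruence:
  assumes "hermitian S" "loewner_le A B"
  shows "loewner_le (S ** A ** S) (S ** B ** S)"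
proof -
  have "S ** B ** S - S ** A ** S = S ** (B - A) ** S"
    by (simp add: matrix_eq)
  then show ?thesis
    using assms psd_congruence by (simp add: loewner_le_def)
qed

definition orthonormal :: "(complex^'n) set \<Rightarrow> bool" where
  "orthonormal E \<longleftrightarrow> (\<forall>v\<in>E. \<forall>w\<in>E. cinner v w = (if v = w then 1 else 0))"

definition orthonormal_eigensystem ::
    "complex^'n^'n \<Rightarrow> (complex^'n) set \<Rightarrow> (complex^'n \<Rightarrow> real) \<Rightarrow> bool" where
  "orthonormal_eigensystem H E lam \<longleftrightarrow>
     orthonormal E \<and> (\<forall>v\<in>E. H *v v = of_real (lam v) *s v)"

definition eigenbasis :: "complex^'n^'n \<Rightarrow> (complex^'n) set \<Rightarrow> (complex^'n \<Rightarrow> real) \<Rightarrow> bool" where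
  "eigenbasis H E lam \<longleftrightarrow> orthonormal_eigensystem H E lam \<and> (\<forall>x. x = (\<Sum>v\<in>E. cinner v x *s v))"

lemma inner_eq_Re_cinner: "inner x y = Re (cinner x y)"
  by (simp add: inner_vec_def cinner_def inner_complex_def)

lemma orthonormal_finite_card_le:
  fixes E :: "(complex^'n) set"
  assumes "orthonormal E"
  shows "finite E" "card E \<le> DIM(complex^'n)"
proof -
  have "pairwise orthogonal E"
    using assms by (auto simp: orthonormal_def pairwise_def orthogonal_def inner_eq_Re_cinner)
  moreover have "0 \<notin> E"
    using assms by (force simp: orthonormal_def)
  ultimately show "finite E" "card E \<le> DIM(complex^'n)"
    using independent_bound pairwise_orthogonal_independent by blast+
qed

lemma orthonormal_sum_cinner:
  assumes "orthonormal E" "u \<in> E"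
  shows "(\<Sum>v\<in>E. c v * cinner u v) = c u"
proof -
  have "(\<Sum>v\<in>E. c v * cinner u v) = (\<Sum>v\<in>E. if u = v then c v else 0)"
    using assms by (intro sum.cong) (auto simp: orthonormal_def)
  also have "\<dots> = c u"
    using assms orthonormal_finite_card_le(1)[OF assms(1)] by simp
  finally show ?thesis .
qed

lemma continuous_on_Re_qform: "continuous_on UNIV (\<lambda>y. Re (qform H y))"
  unfolding qform_def matrix_vector_mult_def
  by (intro continuous_intros linear_continuous_on bounded_linear_vec_nth)

lemma scaleR_eq_of_real_scale: "r *\<^sub>R (x::complex^'n) = of_real r *s x"
  by (simp only: vec_eq_iff scaleR_vec_def vector_scalar_mult_def vec_lambda_beta scaleR_conv_of_real) simp

lemma qform_attains_min_on_unit_cone: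
  fixes W :: "(complex^'n) set"
  assumes "closed W" and "w \<in> W" and "w \<noteq> 0" and scale: "\<And>c y. y \<in> W \<Longrightarrow> c *s y \<in> W"
  obtains x0 where "x0 \<in> W" "norm x0 = 1"
    "\<And>y. y \<in> W \<Longrightarrow> Re (qform H x0) * (norm y)\<^sup>2 \<le> Re (qform H y)"
proof -
  have unit: "(1 / norm y) *\<^sub>R y \<in> W \<inter> sphere 0 1" if "y \<in> W" "y \<noteq> 0" for y
  proof -
    have "(1 / norm y) *\<^sub>R y \<in> W"
      unfolding scaleR_eq_of_real_scale using scale that(1) .
    then show ?thesis using that(2) by simp
  qed
  have "compact (W \<inter> sphere 0 1)"
    using \<open>closed W\<close> by (intro closed_Int_compact compact_sphere)
  moreover have "W \<inter> sphere 0 1 \<noteq> {}"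
    using unit[OF \<open>w \<in> W\<close> \<open>w \<noteq> 0\<close>] by blast
  ultimately obtain x0 where x0: "x0 \<in> W \<inter> sphere 0 1"
    and min: "\<And>y. y \<in> W \<inter> sphere 0 1 \<Longrightarrow> Re (qform H x0) \<le> Re (qform H y)"
    using continuous_attains_inf continuous_on_subset[OF continuous_on_Re_qform] by (metis subset_UNIV)
  have bound: "Re (qform H x0) * (norm y)\<^sup>2 \<le> Re (qform H y)" if "y \<in> W" for y
  proof (cases "y = 0")
    case False
    have "Re (qform H x0) \<le> Re (qform H ((1 / norm y) *\<^sub>R y))"
      using min unit[OF that False] by blast
    also have "\<dots> = Re (qform H y) / (norm y)\<^sup>2"
      by (simp add: scaleR_eq_of_real_scale qform_eq_cinner power2_eq_square)
    finally show ?thesis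
      using False by (simp add: pos_le_divide_eq)
  qed (simp add: qform_eq_cinner)
  with x0 show ?thesis by (intro that) auto
qed

lemma quadratic_nonneg_imp_linear_coeff_zero:
  fixes a b :: real
  assumes "\<And>t. 0 \<le> 2 * t * a + t\<^sup>2 * b"
  shows "a = 0"
proof -
  define c where "c = \<bar>b\<bar> + 1"
  have "c > 0" "b - 2 * c < 0"
    by (auto simp: c_def)
  have "2 * (- a / c) * a + (- a / c)\<^sup>2 * b = a\<^sup>2 * (b - 2 * c) / c\<^sup>2"
    using \<open>c > 0\<close> by (simp add: field_simps power2_eq_square)
  with assms[of "- a / c"] have "0 \<le> a\<^sup>2 * (b - 2 * c) / c\<^sup>2"
    by simp
  with \<open>c > 0\<close> \<open>b - 2 * c < 0\<close> show ?thesis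
    by (simp add: zero_le_divide_iff zero_le_mult_iff)
qed

lemma qform_minimizer_residual_orthogonal:
  assumes "hermitian H"
    and add: "\<And>y z. y \<in> W \<Longrightarrow> z \<in> W \<Longrightarrow> y + z \<in> W"
    and scale: "\<And>c y. y \<in> W \<Longrightarrow> c *s y \<in> W"
    and "x0 \<in> W" "norm x0 = 1"
    and min: "\<And>y. y \<in> W \<Longrightarrow> Re (qform H x0) * (norm y)\<^sup>2 \<le> Re (qform H y)"
    and "y \<in> W"
  shows "cinner y (H *v x0 - of_real (Re (qform H x0)) *s x0) = 0"
proof -
  define l where "l = Re (qform H x0)"
  define g where "g = H *v x0 - of_real l *s x0"
  text \<open>\<open>Q\<close> is nonnegative on \<open>W\<close> and vanishes at \<open>x0\<close>, so its first variation at \<open>x0\<close>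
    in every direction of \<open>W\<close> vanishes.\<close>
  define Q where "Q z = Re (cinner z (H *v z)) - l * Re (cinner z z)" for z
  have norm_sq: "(norm z)\<^sup>2 = Re (cinner z z)" for z
    by (simp add: cinner_self)
  have "Q (x0 + of_real t *s z) = 2 * t * Re (cinner z g) + t\<^sup>2 * Q z" for t z
  proof -
    have "Re (cinner x0 (H *v z)) = Re (cinner z (H *v x0))"
      using hermitian_cinner[OF \<open>hermitian H\<close>] Re_cinner_commute by metis
    moreover have "Re (cinner x0 x0) = 1"
      using \<open>norm x0 = 1\<close> by (simp add: cinner_self)
    ultimately show ?thesis
      by (simp add: Q_def g_def l_def qform_eq_cinner Re_cinner_commute[of x0 z]
          algebra_simps power2_eq_square)
  qed
  moreover have "Q z \<ge> 0" if "z \<in> W" for z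
    using min[OF that] by (simp add: Q_def l_def norm_sq qform_eq_cinner)
  ultimately have Re_zero: "Re (cinner z g) = 0" if "z \<in> W" for z
    using that add scale \<open>x0 \<in> W\<close> by (intro quadratic_nonneg_imp_linear_coeff_zero[where b = "Q z"]) metis
  from Re_zero[OF \<open>y \<in> W\<close>] Re_zero[OF scale[OF \<open>y \<in> W\<close>, of \<i>]]
  show ?thesis
    by (simp add: g_def l_def complex_eq_iff)
qed

lemma orthonormal_eigensystem_extend:
  assumes "hermitian H" and sys: "orthonormal_eigensystem H E lam"
    and "w \<noteq> 0" and "\<forall>u\<in>E. cinner u w = 0"
  obtains x0 l where "x0 \<notin> E" "orthonormal_eigensystem H (insert x0 E) (lam(x0 := l))"
proof -
  define W where "W = {y. \<forall>u\<in>E. cinner u y = 0}"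
  have "closed W"
    unfolding W_def Collect_ball_eq cinner_def
    by (intro closed_INT ballI closed_Collect_eq continuous_intros linear_continuous_on
        bounded_linear_vec_nth)
  have add: "y + z \<in> W" and scale: "c *s y \<in> W" if "y \<in> W" "z \<in> W" for y z c
    using that by (auto simp: W_def)
  obtain x0 where "x0 \<in> W" "norm x0 = 1"
    and min: "\<And>y. y \<in> W \<Longrightarrow> Re (qform H x0) * (norm y)\<^sup>2 \<le> Re (qform H y)"
    using qform_attains_min_on_unit_cone[OF \<open>closed W\<close>, of w H] assms(3,4) scale
    by (auto simp: W_def)
  define l where "l = Re (qform H x0)"
  define g where "g = H *v x0 - of_real l *s x0"
  text \<open>\<open>W\<close> is \<open>H\<close>-invariant, so the residual \<open>g\<close> lies in \<open>W\<close> and is orthogonal to itself.\<close>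
  have "g \<in> W"
  proof -
    have "cinner u (H *v x0) = 0" if "u \<in> E" for u
      using that sys \<open>x0 \<in> W\<close>
      by (simp add: hermitian_cinner[OF \<open>hermitian H\<close>] orthonormal_eigensystem_def W_def)
    with \<open>x0 \<in> W\<close> show ?thesis by (simp add: g_def W_def)
  qed
  then have "cinner g g = 0"
    unfolding g_def l_def
    using qform_minimizer_residual_orthogonal[OF \<open>hermitian H\<close> _ _ \<open>x0 \<in> W\<close> \<open>norm x0 = 1\<close> min] add scale
    by blast
  then have "g = 0" by simp
  then have eigen: "H *v x0 = of_real l *s x0"
    by (simp add: g_def)
  have unit: "cinner x0 x0 = 1"
    using \<open>norm x0 = 1\<close> by (simp add: cinner_self)
  have orth: "cinner u x0 = 0" "cinner x0 u = 0" if "u \<in> E" for u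
    using \<open>x0 \<in> W\<close> that cinner_commute[of x0 u] by (auto simp: W_def)
  have "x0 \<notin> E"
    using unit orth by force
  moreover have "orthonormal_eigensystem H (insert x0 E) (lam(x0 := l))"
    using sys eigen unit orth \<open>x0 \<notin> E\<close> by (auto simp: orthonormal_eigensystem_def orthonormal_def)
  ultimately show ?thesis
    by (rule that)
qed

theorem hermitian_has_eigenbasis:
  fixes H :: "complex^'n^'n"
  assumes "hermitian H"
  obtains E lam where "eigenbasis H E lam"
proof -
  define sizes where "sizes = {card E | E lam. orthonormal_eigensystem H E lam}"
  have "orthonormal_eigensystem H {} (\<lambda>_. 0)"
    by (simp add: orthonormal_eigensystem_def orthonormal_def)
  then have "card ({} :: (complex^'n) set) \<in> sizes"
    unfolding sizes_def by fastforce
  moreover have "sizes \<subseteq> {..DIM(complex^'n)}"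
    using orthonormal_finite_card_le(2) by (auto simp: sizes_def orthonormal_eigensystem_def)
  ultimately have "finite sizes" "sizes \<noteq> {}"
    using finite_subset by auto
  then have "Max sizes \<in> sizes" "\<forall>k\<in>sizes. k \<le> Max sizes"
    by simp_all
  then obtain E lam where sys: "orthonormal_eigensystem H E lam"
    and maximal: "\<And>E' lam'. orthonormal_eigensystem H E' lam' \<Longrightarrow> card E' \<le> card E"
    unfolding sizes_def by fastforce
  have fin: "finite E"
    using sys orthonormal_finite_card_le(1) by (auto simp: orthonormal_eigensystem_def)
  have expansion: "x = (\<Sum>v\<in>E. cinner v x *s v)" for x
  proof (rule ccontr)
    define w where "w = x - (\<Sum>v\<in>E. cinner v x *s v)"
    assume "x \<noteq> (\<Sum>v\<in>E. cinner v x *s v)"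
    then have "w \<noteq> 0" by (simp add: w_def)
    moreover have "\<forall>u\<in>E. cinner u w = 0"
      using sys by (simp add: w_def cinner_sum_right orthonormal_sum_cinner orthonormal_eigensystem_def)
    ultimately obtain x0 l where "x0 \<notin> E" "orthonormal_eigensystem H (insert x0 E) (lam(x0 := l))"
      using orthonormal_eigensystem_extend[OF assms sys] by blast
    with maximal[of "insert x0 E"] fin show False by simp
  qed
  show ?thesis
    using sys expansion by (intro that[of E lam]) (simp add: eigenbasis_def)
qed

text \<open>For an eigenbasis \<open>(E, lam)\<close> of \<open>H\<close> this is \<open>f(H)\<close>.\<close>

definition spectral_matrix ::
    "(complex^'n) set \<Rightarrow> (complex^'n \<Rightarrow> real) \<Rightarrow> (real \<Rightarrow> real) \<Rightarrow> complex^'n^'n" where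
  "spectral_matrix E lam f = (\<chi> i j. \<Sum>v\<in>E. of_real (f (lam v)) * v $ i * cnj (v $ j))"

lemma spectral_matrix_mult_vec:
  "spectral_matrix E lam f *v x = (\<Sum>v\<in>E. (of_real (f (lam v)) * cinner v x) *s v)"
proof -
  have "(spectral_matrix E lam f *v x) $ i
      = (\<Sum>v\<in>E. \<Sum>j\<in>UNIV. of_real (f (lam v)) * v $ i * cnj (v $ j) * x $ j)" for i
    by (simp add: spectral_matrix_def matrix_vector_mult_def sum_distrib_right sum.swap[of _ UNIV])
  then show ?thesis
    by (simp add: vec_eq_iff sum_component cinner_def sum_distrib_left sum_distrib_right mult_ac)
qed

lemma cinner_spectral_matrix:
  "orthonormal E \<Longrightarrow> w \<in> E \<Longrightarrow>
    cinner w (spectral_matrix E lam f *v x) = of_real (f (lam w)) * cinner w x"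
  by (simp add: spectral_matrix_mult_vec cinner_sum_right orthonormal_sum_cinner)

lemma spectral_matrix_mult:
  assumes "orthonormal E"
  shows "spectral_matrix E lam f ** spectral_matrix E lam g = spectral_matrix E lam (\<lambda>t. f t * g t)"
  unfolding matrix_eq
  by (simp add: spectral_matrix_mult_vec[of E lam f] cinner_spectral_matrix[OF assms]
      spectral_matrix_mult_vec[of E lam "\<lambda>t. f t * g t"] mult.assoc)

lemma spectral_matrix_id:
  assumes "eigenbasis H E lam"
  shows "spectral_matrix E lam (\<lambda>t. t) = H"
  unfolding matrix_eq
proof
  fix x
  have "H *v x = H *v (\<Sum>v\<in>E. cinner v x *s v)"
    using assms by (metis eigenbasis_def)
  also have "\<dots> = (\<Sum>v\<in>E. cinner v x *s (H *v v))"
    by (simp add: vec.sum)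
  also have "\<dots> = (\<Sum>v\<in>E. (of_real (lam v) * cinner v x) *s v)"
    using assms by (intro sum.cong refl)
      (simp add: eigenbasis_def orthonormal_eigensystem_def vector_smult_assoc mult.commute)
  finally show "spectral_matrix E lam (\<lambda>t. t) *v x = H *v x"
    by (simp add: spectral_matrix_mult_vec)
qed

lemma spectral_matrix_cong:
  "(\<And>v. v \<in> E \<Longrightarrow> f (lam v) = g (lam v)) \<Longrightarrow> spectral_matrix E lam f = spectral_matrix E lam g"
  by (simp add: spectral_matrix_def vec_eq_iff)

lemma hermitian_spectral_matrix: "hermitian (spectral_matrix E lam f)"
  by (simp add: hermitian_def adj_def spectral_matrix_def vec_eq_iff mult_ac)

lemma psd_spectral_matrix:
  assumes "\<And>v. v \<in> E \<Longrightarrow> 0 \<le> f (lam v)"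
  shows "psd (spectral_matrix E lam f)"
proof -
  have "qform (spectral_matrix E lam f) x = (\<Sum>v\<in>E. of_real (f (lam v) * (cmod (cinner v x))\<^sup>2))" for x
    by (simp add: qform_eq_cinner spectral_matrix_mult_vec cinner_sum_right cinner_commute[of x]
        mult.assoc flip: complex_norm_square)
  with assms show ?thesis
    by (simp add: psd_def hermitian_spectral_matrix sum_nonneg)
qed

lemma Re_qform_eigenvector:
  "H *v v = of_real l *s v \<Longrightarrow> Re (qform H v) = l * (norm v)\<^sup>2"
  by (simp add: qform_eq_cinner cinner_self)

lemma eigenbasis_eigenvector:
  assumes "eigenbasis H E lam" "v \<in> E"
  shows "v \<noteq> 0" "H *v v = of_real (lam v) *s v"
  using assms unfolding eigenbasis_def orthonormal_eigensystem_def orthonormal_def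
  by (metis cinner_zero_left zero_neq_one, blast)

lemma psd_if_eigenvalues_nonneg:
  assumes "hermitian H" and "\<And>v l. v \<noteq> 0 \<Longrightarrow> H *v v = of_real l *s v \<Longrightarrow> 0 \<le> l"
  shows "psd H"
proof -
  obtain E lam where basis: "eigenbasis H E lam"
    using hermitian_has_eigenbasis[OF assms(1)] .
  then have "0 \<le> lam v" if "v \<in> E" for v
    using that assms(2) eigenbasis_eigenvector by blast
  then show ?thesis
    using psd_spectral_matrix[of E "\<lambda>t. t" lam] spectral_matrix_id[OF basis] by simp
qed

lemma hermitian_eq_0_if_eigenvalues_0:
  assumes "hermitian H" and "\<And>v l. v \<noteq> 0 \<Longrightarrow> H *v v = of_real l *s v \<Longrightarrow> l = 0"
  shows "H = 0"
proof -
  obtain E lam where basis: "eigenbasis H E lam"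
    using hermitian_has_eigenbasis[OF assms(1)] .
  then have "lam v = 0" if "v \<in> E" for v
    using that assms(2) eigenbasis_eigenvector by blast
  then have "spectral_matrix E lam (\<lambda>t. t) = spectral_matrix E lam (\<lambda>_. 0)"
    by (intro spectral_matrix_cong) simp
  then show ?thesis
    using spectral_matrix_id[OF basis] by (simp add: spectral_matrix_def vec_eq_iff)
qed

lemma loewner_le_antisym:
  assumes "loewner_le A B" "loewner_le B A"
  shows "A = B"
proof -
  have "B - A = 0"
  proof (rule hermitian_eq_0_if_eigenvalues_0)
    show "hermitian (B - A)"
      using assms(1) by (simp add: loewner_le_def psd_imp_hermitian)
    fix v l assume "v \<noteq> 0" "(B - A) *v v = of_real l *s v"
    then have "Re (qform (B - A) v) = l * (norm v)\<^sup>2" "Re (qform (A - B) v) = - l * (norm v)\<^sup>2"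
      using Re_qform_eigenvector[of "A - B" v "- l"] by (simp_all add: Re_qform_eigenvector algebra_simps)
    then have "0 \<le> l * (norm v)\<^sup>2" "0 \<le> - l * (norm v)\<^sup>2"
      using assms by (metis loewner_le_def psd_qform_nonneg)+
    then have "l * (norm v)\<^sup>2 = 0"
      by simp
    with \<open>v \<noteq> 0\<close> show "l = 0"
      by simp
  qed
  then show ?thesis by simp
qed

section \<open>Square roots\<close>

lemma psd_sqrt_exists:
  assumes "psd H"
  obtains S where "psd S" "S ** S = H"
proof -
  obtain E lam where basis: "eigenbasis H E lam"
    using hermitian_has_eigenbasis psd_imp_hermitian[OF assms] by blast
  have nonneg: "0 \<le> lam v" if "v \<in> E" for v
  proof -
    have "0 \<le> lam v * (norm v)\<^sup>2"
      using psd_qform_nonneg[OF assms] Re_qform_eigenvector eigenbasis_eigenvector[OF basis that]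
      by metis
    with eigenbasis_eigenvector(1)[OF basis that] show ?thesis
      by (simp add: zero_le_mult_iff)
  qed
  have "spectral_matrix E lam sqrt ** spectral_matrix E lam sqrt
      = spectral_matrix E lam (\<lambda>t. sqrt t * sqrt t)"
    using basis by (simp add: spectral_matrix_mult eigenbasis_def orthonormal_eigensystem_def)
  also have "\<dots> = spectral_matrix E lam (\<lambda>t. t)"
    using nonneg by (intro spectral_matrix_cong) simp
  also have "\<dots> = H"
    using basis by (rule spectral_matrix_id)
  finally have "spectral_matrix E lam sqrt ** spectral_matrix E lam sqrt = H" .
  moreover have "psd (spectral_matrix E lam sqrt)"
    by (rule psd_spectral_matrix) (simp add: nonneg)
  ultimately show ?thesis
    using that by blast
qed

lemma loewner_le_of_square_le:
  fixes C P :: "complex^'n^'n"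
  assumes "hermitian C" "psd P" "loewner_le (C ** C) (P ** P)"
  shows "loewner_le C P"
  unfolding loewner_le_def
proof (rule psd_if_eigenvalues_nonneg)
  show "hermitian (P - C)"
    using assms by (simp add: hermitian_diff psd_imp_hermitian)
  fix v l assume "v \<noteq> 0" and eigen: "(P - C) *v v = of_real l *s v"
  show "0 \<le> l"
  proof (rule ccontr)
    assume "\<not> 0 \<le> l"
    define q where "q = Re (cinner v (P *v v))"
    have "q \<ge> 0"
      using psd_qform_nonneg[OF assms(2)] by (simp add: q_def qform_eq_cinner)
    have Cv: "C *v v = P *v v - of_real l *s v"
      using eigen by (simp add: algebra_simps)
    have "Re (qform (P ** P - C ** C) v) = Re (cinner (P *v v) (P *v v)) - Re (cinner (C *v v) (C *v v))"
      by (simp add: qform_eq_cinner hermitian_cinner[OF psd_imp_hermitian[OF assms(2)]]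
          hermitian_cinner[OF assms(1)])
    also have "\<dots> = 2 * l * q - l\<^sup>2 * Re (cinner v v)"
      unfolding Cv
      by (simp add: q_def Re_cinner_commute[of "P *v v" v] algebra_simps power2_eq_square)
    also have "\<dots> < 0"
    proof -
      have "l * q \<le> 0"
        using \<open>\<not> 0 \<le> l\<close> \<open>q \<ge> 0\<close> by (simp add: mult_nonpos_nonneg)
      moreover have "l\<^sup>2 * Re (cinner v v) > 0"
        using \<open>\<not> 0 \<le> l\<close> \<open>v \<noteq> 0\<close> by (simp add: cinner_self)
      ultimately show ?thesis by simp
    qed
    finally show False
      using assms(3) psd_qform_nonneg[of "P ** P - C ** C" v] by (simp add: loewner_le_def)
  qed
qed

lemma psd_sqrt_unique:
  assumes "psd S" "psd T" "S ** S = T ** T"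
  shows "S = T"
proof (rule loewner_le_antisym)
  show "loewner_le S T" "loewner_le T S"
    using assms by (simp_all add: loewner_le_of_square_le psd_imp_hermitian)
qed

lemma
  assumes "psd A"
  shows psd_msqrt: "psd (msqrt A)" and msqrt_square: "msqrt A ** msqrt A = A"
proof -
  obtain S where "psd S" "S ** S = A"
    using psd_sqrt_exists[OF assms] .
  then have "\<exists>!S. psd S \<and> S ** S = A"
    by (intro ex1I[of _ S]) (auto intro: psd_sqrt_unique)
  from theI'[OF this] show "psd (msqrt A)" "msqrt A ** msqrt A = A"
    unfolding msqrt_def by simp_all
qed

lemma
  fixes A :: "'a::semiring_1^'n^'n"
  assumes "invertible A"
  shows matrix_inv_right: "A ** matrix_inv A = mat 1"
    and matrix_inv_left: "matrix_inv A ** A = mat 1"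
  using someI_ex[OF assms[unfolded invertible_def]] by (simp_all add: matrix_inv_def)

lemma invertible_msqrt:
  assumes "posdef A"
  shows "invertible (msqrt A)"
proof -
  have square: "msqrt A ** msqrt A = A"
    using msqrt_square[OF posdef_imp_psd[OF assms]] .
  have "x = y" if "msqrt A *v x = msqrt A *v y" for x y
  proof (rule ccontr)
    assume "x \<noteq> y"
    then have "0 < Re (qform A (x - y))"
      using assms by (simp add: posdef_def)
    moreover have "A *v (x - y) = (msqrt A ** msqrt A) *v (x - y)"
      by (simp only: square)
    with that have "qform A (x - y) = 0"
      by (simp add: qform_eq_cinner)
    ultimately show False
      by simp
  qed
  then have "inj ((*v) (msqrt A))"
    by (rule injI)
  then show ?thesis
    by (simp add: invertible_left_inverse matrix_left_invertible_injective)
qed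

lemma mult_vec_right_inverse: "R ** Ri = mat 1 \<Longrightarrow> R *v (Ri *v x) = x"
  by (metis matrix_vector_mul_assoc matrix_vector_mul_lid)

lemma hermitian_inverse:
  assumes "hermitian R" "R ** Ri = mat 1"
  shows "hermitian Ri"
proof -
  note RRi = mult_vec_right_inverse[OF assms(2)]
  have "cinner x (Ri *v y) = cinner (Ri *v x) y" for x y
  proof -
    have "cinner x (Ri *v y) = cinner (R *v (Ri *v x)) (Ri *v y)"
      by (simp add: RRi)
    also have "\<dots> = cinner (Ri *v x) (R *v (Ri *v y))"
      by (rule hermitian_cinner[OF assms(1), symmetric])
    also have "\<dots> = cinner (Ri *v x) y"
      by (simp add: RRi)
    finally show ?thesis .
  qed
  then show ?thesis
    by (simp add: hermitian_iff_cinner)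
qed

section \<open>Block matrices and the geometric mean\<close>

definition vec_join :: "complex^'n \<Rightarrow> complex^'n \<Rightarrow> complex^('n + 'n)" where
  "vec_join u v = (\<chi> k. case k of Inl a \<Rightarrow> u $ a | Inr b \<Rightarrow> v $ b)"

lemma vec_join_split: "z = vec_join (\<chi> a. z $ Inl a) (\<chi> b. z $ Inr b)"
  by (simp add: vec_join_def vec_eq_iff split: sum.split)

lemma sum_UNIV_sum_type:
  "(\<Sum>k\<in>(UNIV :: ('a::finite + 'b::finite) set). f k) = (\<Sum>a\<in>UNIV. f (Inl a)) + (\<Sum>b\<in>UNIV. f (Inr b))"
  by (simp flip: UNIV_Plus_UNIV add: sum.Plus comp_def)

lemma qform_block2_vec_join:
  "qform (block2 A X Y B) (vec_join u v)
    = qform A u + cinner u (X *v v) + cinner v (Y *v u) + qform B v"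
  unfolding qform_def cinner_def matrix_vector_mult_def block2_def vec_join_def
  by (simp add: sum_UNIV_sum_type distrib_left sum.distrib algebra_simps)

lemma hermitian_block2:
  assumes "hermitian A" "hermitian X" "hermitian B"
  shows "hermitian (block2 A X X B)"
  using assms unfolding hermitian_def adj_def block2_def
  by (simp add: vec_eq_iff split: sum.split)

lemma psd_block2_iff:
  assumes "hermitian A" "hermitian X" "hermitian B"
  shows "psd (block2 A X X B) \<longleftrightarrow>
    (\<forall>u v. 0 \<le> Re (qform A u + cinner u (X *v v) + cinner v (X *v u) + qform B v))"
  using assms hermitian_block2 vec_join_split
  by (metis psd_def qform_block2_vec_join)

lemma psd_block2_mono:
  assumes "hermitian A" "hermitian X" "hermitian B" "psd (block2 A X X B)"
    and "loewner_le A M" "loewner_le B N"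
  shows "psd (block2 M X X N)"
proof -
  have "psd (M - A)" "psd (N - B)"
    using assms(5,6) by (simp_all add: loewner_le_def)
  moreover from this have "hermitian M" "hermitian N"
    using assms(1,3) hermitian_add[OF psd_imp_hermitian] by fastforce+
  ultimately show ?thesis
    unfolding psd_block2_iff[OF \<open>hermitian M\<close> assms(2) \<open>hermitian N\<close>]
  proof (intro allI)
    fix u v
    have "0 \<le> Re (qform A u + cinner u (X *v v) + cinner v (X *v u) + qform B v)"
      using assms(4) psd_block2_iff[OF assms(1-3)] by blast
    moreover have "0 \<le> Re (qform (M - A) u)" "0 \<le> Re (qform (N - B) v)"
      using \<open>psd (M - A)\<close> \<open>psd (N - B)\<close> by (simp_all add: psd_qform_nonneg)
    ultimately show "0 \<le> Re (qform M u + cinner u (X *v v) + cinner v (X *v u) + qform N v)"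
      by (simp add: qform_eq_cinner)
  qed
qed

lemma psd_block2_congruence:
  assumes "hermitian S" "hermitian A" "hermitian X" "hermitian B" "psd (block2 A X X B)"
  shows "psd (block2 (S ** A ** S) (S ** X ** S) (S ** X ** S) (S ** B ** S))"
  using assms
  by (simp add: psd_block2_iff hermitian_congruence qform_congruence hermitian_cinner[of S])

lemma psd_block2_one_iff:
  assumes "hermitian C" "hermitian D"
  shows "psd (block2 (mat 1) C C D) \<longleftrightarrow> loewner_le (C ** C) D"
proof -
  have completed_square: "qform (mat 1) u + cinner u (C *v v) + cinner v (C *v u) + qform D v
      = cinner (u + C *v v) (u + C *v v) + qform (D - C ** C) v" for u v
    by (simp add: qform_eq_cinner hermitian_cinner[OF assms(1)])
  show ?thesis
  proof
    assume "psd (block2 (mat 1) C C D)"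
    have "0 \<le> Re (qform (D - C ** C) v)" for v
    proof -
      have "0 \<le> Re (qform (mat 1) (- (C *v v)) + cinner (- (C *v v)) (C *v v)
          + cinner v (C *v - (C *v v)) + qform D v)"
        using \<open>psd (block2 (mat 1) C C D)\<close> psd_block2_iff[OF hermitian_mat_1 assms] by blast
      then show ?thesis
        unfolding completed_square by simp
    qed
    then show "loewner_le (C ** C) D"
      using assms by (simp add: loewner_le_def psd_def hermitian_diff hermitian_square)
  next
    assume "loewner_le (C ** C) D"
    then show "psd (block2 (mat 1) C C D)"
      using assms psd_qform_nonneg[of "D - C ** C"]
      by (simp add: psd_block2_iff completed_square loewner_le_def cinner_self hermitian_mat_1)
  qed
qed

lemma congruence_inverse_cancel:
  assumes "R ** Ri = mat 1" "Ri ** R = mat 1"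
  shows "R ** (Ri ** Y ** Ri) ** R = Y"
  using mult_vec_right_inverse[OF assms(1)] mult_vec_right_inverse[OF assms(2)]
  by (simp add: matrix_eq)

lemma gmean_decomposition:
  assumes "posdef A" "posdef B"
  obtains R Ri P where "hermitian R" "hermitian Ri" "R ** Ri = mat 1" "Ri ** R = mat 1"
    "R ** R = A" "psd P" "P ** P = Ri ** B ** Ri" "gmean A B = R ** P ** R"
proof -
  define R where "R = msqrt A"
  define Ri where "Ri = matrix_inv R"
  define P where "P = msqrt (Ri ** B ** Ri)"
  have "psd R" "R ** R = A"
    using posdef_imp_psd[OF assms(1)] by (simp_all add: R_def psd_msqrt msqrt_square)
  moreover have inverse: "R ** Ri = mat 1" "Ri ** R = mat 1"
    using invertible_msqrt[OF assms(1)] by (simp_all add: R_def Ri_def matrix_inv_right matrix_inv_left)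
  moreover have "hermitian Ri"
    using hermitian_inverse psd_imp_hermitian \<open>psd R\<close> inverse by blast
  moreover have "psd (Ri ** B ** Ri)"
    using psd_congruence[OF \<open>hermitian Ri\<close> posdef_imp_psd[OF assms(2)]] .
  then have "psd P" "P ** P = Ri ** B ** Ri"
    by (simp_all add: P_def psd_msqrt msqrt_square)
  moreover have "gmean A B = R ** P ** R"
    by (simp add: gmean_def Let_def R_def Ri_def P_def)
  ultimately show ?thesis
    using that psd_imp_hermitian by blast
qed

lemma hermitian_gmean:
  assumes "posdef A" "posdef B"
  shows "hermitian (gmean A B)"
proof -
  obtain R Ri P where "hermitian R" "psd P" "gmean A B = R ** P ** R"
    using gmean_decomposition[OF assms] by blast
  then show ?thesis
    by (simp add: hermitian_congruence psd_imp_hermitian)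
qed

lemma psd_block2_gmean:
  assumes "posdef A" "posdef B"
  shows "psd (block2 A (gmean A B) (gmean A B) B)"
proof -
  obtain R Ri P where "hermitian R" "R ** Ri = mat 1" "Ri ** R = mat 1" "R ** R = A"
    and "psd P" "P ** P = Ri ** B ** Ri" "gmean A B = R ** P ** R"
    using gmean_decomposition[OF assms] by blast
  have "hermitian P"
    using \<open>psd P\<close> by (rule psd_imp_hermitian)
  then have "psd (block2 (mat 1) P P (P ** P))"
    by (simp add: psd_block2_one_iff hermitian_square)
  then have "psd (block2 (R ** mat 1 ** R) (R ** P ** R) (R ** P ** R) (R ** (P ** P) ** R))"
    using \<open>hermitian R\<close> \<open>hermitian P\<close>
    by (intro psd_block2_congruence) (simp_all add: hermitian_mat_1 hermitian_square)
  moreover have "R ** mat 1 ** R = A" "R ** (P ** P) ** R = B"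
    using \<open>R ** R = A\<close> \<open>P ** P = Ri ** B ** Ri\<close> congruence_inverse_cancel[OF \<open>R ** Ri = mat 1\<close> \<open>Ri ** R = mat 1\<close>]
    by simp_all
  ultimately show ?thesis
    using \<open>gmean A B = R ** P ** R\<close> by simp
qed

lemma loewner_le_gmean_if_psd_block2:
  assumes "posdef A" "posdef B" "hermitian X" "psd (block2 A X X B)"
  shows "loewner_le X (gmean A B)"
proof -
  obtain R Ri P where "hermitian R" "hermitian Ri" "R ** Ri = mat 1" "Ri ** R = mat 1"
    and "R ** R = A" "psd P" "P ** P = Ri ** B ** Ri" "gmean A B = R ** P ** R"
    using gmean_decomposition[OF assms(1,2)] .
  note cancel = congruence_inverse_cancel[OF \<open>R ** Ri = mat 1\<close> \<open>Ri ** R = mat 1\<close>]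
    and cancel' = congruence_inverse_cancel[OF \<open>Ri ** R = mat 1\<close> \<open>R ** Ri = mat 1\<close>]
  define C where "C = Ri ** X ** Ri"
  have "hermitian C"
    by (simp add: C_def hermitian_congruence \<open>hermitian Ri\<close> \<open>hermitian X\<close>)
  have "hermitian A" "hermitian B"
    using assms(1,2) by (simp_all add: posdef_def)
  then have "psd (block2 (Ri ** A ** Ri) C C (Ri ** B ** Ri))"
    unfolding C_def using assms(3,4) \<open>hermitian Ri\<close> by (intro psd_block2_congruence)
  moreover have "Ri ** A ** Ri = mat 1"
    using cancel'[of "mat 1"] \<open>R ** R = A\<close> by simp
  moreover have "hermitian (P ** P)"
    using \<open>psd P\<close> by (simp add: hermitian_square psd_imp_hermitian)
  ultimately have "loewner_le (C ** C) (P ** P)"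
    using psd_block2_one_iff[OF \<open>hermitian C\<close>] \<open>P ** P = Ri ** B ** Ri\<close> by simp
  then have "loewner_le C P"
    by (rule loewner_le_of_square_le[OF \<open>hermitian C\<close> \<open>psd P\<close>])
  then have "loewner_le (R ** C ** R) (R ** P ** R)"
    by (rule loewner_le_congruence[OF \<open>hermitian R\<close>])
  then show ?thesis
    using cancel[of X] \<open>gmean A B = R ** P ** R\<close> by (simp add: C_def)
qed

lemma gmean_mono:
  assumes "posdef A" "posdef B" "posdef M" "posdef N" "loewner_le A M" "loewner_le B N"
  shows "loewner_le (gmean A B) (gmean M N)"
proof -
  have "hermitian A" "hermitian B"
    using assms(1,2) by (simp_all add: posdef_def)
  then have "psd (block2 M (gmean A B) (gmean A B) N)"
    using psd_block2_mono hermitian_gmean[OF assms(1,2)] psd_block2_gmean[OF assms(1,2)] assms(5,6)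
    by blast
  then show ?thesis
    by (rule loewner_le_gmean_if_psd_block2[OF assms(3,4) hermitian_gmean[OF assms(1,2)]])
qed

theorem proposition3p3:
  fixes S T :: "(complex^'n^'n) set" and M N :: "complex^'n^'n"
  assumes "S \<noteq> {}" and "T \<noteq> {}"
    and "\<forall>A\<in>S. posdef A" and "\<forall>B\<in>T. posdef B"
    and "loewner_chain S" and "loewner_chain T"
    and "loewner_max S M" and "loewner_max T N"
  shows "loewner_max {X. hermitian X \<and> (\<exists>A\<in>S. \<exists>B\<in>T. psd (block2 A X X B))} (gmean M N)"
proof -
  have "M \<in> S" "N \<in> T" and below: "\<forall>A\<in>S. loewner_le A M" "\<forall>B\<in>T. loewner_le B N"
    using assms(7,8) by (simp_all add: loewner_max_def)
  then have "posdef M" "posdef N"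
    using assms(3,4) by blast+
  show ?thesis
    unfolding loewner_max_def
  proof (intro conjI ballI)
    show "gmean M N \<in> {X. hermitian X \<and> (\<exists>A\<in>S. \<exists>B\<in>T. psd (block2 A X X B))}"
      using \<open>M \<in> S\<close> \<open>N \<in> T\<close> \<open>posdef M\<close> \<open>posdef N\<close> hermitian_gmean psd_block2_gmean by blast
  next
    fix X assume "X \<in> {X. hermitian X \<and> (\<exists>A\<in>S. \<exists>B\<in>T. psd (block2 A X X B))}"
    then obtain A B where "hermitian X" "A \<in> S" "B \<in> T" "psd (block2 A X X B)"
      by blast
    with assms(3,4) have "posdef A" "posdef B"
      by blast+
    have "loewner_le X (gmean A B)"
      using \<open>posdef A\<close> \<open>posdef B\<close> \<open>hermitian X\<close> \<open>psd (block2 A X X B)\<close>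
      by (rule loewner_le_gmean_if_psd_block2)
    also have "loewner_le (gmean A B) (gmean M N)"
      using \<open>posdef A\<close> \<open>posdef B\<close> \<open>posdef M\<close> \<open>posdef N\<close> \<open>A \<in> S\<close> \<open>B \<in> T\<close> below
      by (simp add: gmean_mono)
    finally show "loewner_le X (gmean M N)" .
  qed
qed

end
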